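(* Let $T$ be a tree on $n$ vertices whose characteristic polynomial is irreducible over $\mathbb{Q}$, and order the vertices according to the bipartition so that $A(T)=\begin{bmatrix} O & M\\ M^{\mathrm T} & O\end{bmatrix}$. Then $\Delta(T)=2^n\Delta^2(M^{\mathrm T}M)$.
   Context: For a monic polynomial $f$ of degree $k$ with roots $\alpha_1,\dots,\alpha_k$, the discriminant is $\Delta(f)=\prod_{1\le i<j\le k}(\alpha_i-\alpha_j)^2$. For a square matrix $B$, $\Delta(B)$ is the discriminant of $\det(xI-B)$; $\Delta(T)$ is the discriminant of the adjacency matrix $A(T)$. *)

theory Defs
  imports "Jordan_Normal_Form.Char_Poly" "HOL-Computational_Algebra.Fundamental_Theorem_Algebra"
begin

definition simple_graph :: "nat \<Rightarrow> (nat \<Rightarrow> nat \<Rightarrow> bool) \<Rightarrow> bool" where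
  "simple_graph n E \<longleftrightarrow> (\<forall>i j. E i j \<longrightarrow> i < n \<and> j < n) \<and> (\<forall>i j. E i j \<longrightarrow> E j i) \<and> (\<forall>i. \<not> E i i)"

definition graph_connected :: "nat \<Rightarrow> (nat \<Rightarrow> nat \<Rightarrow> bool) \<Rightarrow> bool" where
  "graph_connected n E \<longleftrightarrow> (\<forall>i<n. \<forall>j<n. E\<^sup>*\<^sup>* i j)"

definition has_cycle :: "(nat \<Rightarrow> nat \<Rightarrow> bool) \<Rightarrow> bool" where
  "has_cycle E \<longleftrightarrow> (\<exists>vs. length vs \<ge> 3 \<and> distinct vs \<and>
      (\<forall>i. Suc i < length vs \<longrightarrow> E (vs ! i) (vs ! Suc i)) \<and> E (last vs) (hd vs))"

definition is_tree :: "nat \<Rightarrow> (nat \<Rightarrow> nat \<Rightarrow> bool) \<Rightarrow> bool" where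
  "is_tree n E \<longleftrightarrow> n \<ge> 1 \<and> simple_graph n E \<and> graph_connected n E \<and> \<not> has_cycle E"

definition adj_mat :: "nat \<Rightarrow> (nat \<Rightarrow> nat \<Rightarrow> bool) \<Rightarrow> rat mat" where
  "adj_mat n E = mat n n (\<lambda>(i,j). if E i j then 1 else 0)"

(* discriminant of a monic polynomial: product over pairs of roots (with multiplicity)
   of squared differences, roots taken in \<complex> *)
definition poly_disc :: "complex poly \<Rightarrow> complex" where
  "poly_disc f = (let rs = (SOME rs. f = (\<Prod>r\<leftarrow>rs. [:- r, 1:])) in
     (\<Prod>i<length rs. \<Prod>j<length rs. if i < j then (rs ! i - rs ! j)^2 else 1))"

definition mat_disc :: "rat mat \<Rightarrow> complex" where
  "mat_disc B = poly_disc (map_poly of_rat (char_poly B))"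

end

(* Irreducibility of the characteristic polynomial of A = A(T) (of degree n >= 2) excludes the
   eigenvalue 0, so det A <> 0. A nonzero term of the determinant expansion of the bipartite matrix
   A maps each colour class injectively into the other, hence p = q =: m. The nonzero terms of
   det M are the perfect matchings of T, and a forest has at most one (two different ones would
   contain an alternating cycle), so det M = +-1 and det (M^T M) = 1. Finally
   char A (x) = char (M^T M) (x^2): if mu_1, ..., mu_m are the eigenvalues of M^T M, those of A are
   the +-sqrt mu_i, and expanding the discriminant gives
   Delta(A) = 4^m (mu_1 ... mu_m) Delta(M^T M)^2 = 2^n Delta(M^T M)^2. *)

theory Submission
  imports Defs "Berlekamp_Zassenhaus.Mahler_Measure"
begin

fun root_disc :: "'a::comm_ring_1 list \<Rightarrow> 'a" where
  "root_disc [] = 1"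
| "root_disc (a # xs) = (\<Prod>x\<leftarrow>xs. (a - x)^2) * root_disc xs"

lemma prod_pairs_eq_root_disc:
  "(\<Prod>i<length rs. \<Prod>j<length rs. if i < j then (rs ! i - rs ! j)^2 else 1) = root_disc rs"
proof (induction rs)
  case (Cons a rs)
  define row where
    "row i = (\<Prod>j<Suc (length rs). if i < j then ((a # rs) ! i - (a # rs) ! j)^2 else 1)" for i
  have row_0: "row 0 = (\<Prod>x\<leftarrow>rs. (a - x)^2)"
    unfolding row_def
    by (simp add: prod.lessThan_Suc_shift prod.list_conv_set_nth atLeast0LessThan del: prod.lessThan_Suc)
  have row_Suc: "row (Suc i) = (\<Prod>j<length rs. if i < j then (rs ! i - rs ! j)^2 else 1)" for i
    unfolding row_def by (subst prod.lessThan_Suc_shift) (simp only: nth_Cons_Suc, simp)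
  have "(\<Prod>i<length (a # rs). \<Prod>j<length (a # rs). if i < j then ((a # rs) ! i - (a # rs) ! j)^2 else 1)
      = (\<Prod>i<Suc (length rs). row i)"
    unfolding row_def length_Cons ..
  also have "\<dots> = row 0 * (\<Prod>i<length rs. row (Suc i))"
    by (rule prod.lessThan_Suc_shift)
  finally show ?case
    unfolding row_0 row_Suc Cons.IH by simp
qed simp

lemma prod_list_map_remove1:
  fixes f :: "'a \<Rightarrow> 'b::comm_monoid_mult"
  shows "x \<in> set xs \<Longrightarrow> (\<Prod>y\<leftarrow>xs. f y) = f x * (\<Prod>y\<leftarrow>remove1 x xs. f y)"
  by (induction xs) (auto simp: ac_simps)

lemma root_disc_remove1:
  "y \<in> set xs \<Longrightarrow> root_disc xs = (\<Prod>x\<leftarrow>remove1 y xs. (y - x)^2) * root_disc (remove1 y xs)"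
proof (induction xs)
  case (Cons b xs)
  show ?case
  proof (cases "b = y")
    case False
    with Cons have y: "y \<in> set xs" by simp
    have "(b - y)^2 = (y - b)^2" by (rule power2_commute)
    with False show ?thesis
      by (simp add: Cons.IH[OF y] prod_list_map_remove1[OF y] ac_simps)
  qed simp
qed simp

lemma root_disc_mset_eq: "mset xs = mset ys \<Longrightarrow> root_disc xs = root_disc ys"
proof (induction ys arbitrary: xs)
  case (Cons a ys)
  have "set xs = set (a # ys)"
    using Cons.prems by (rule mset_eq_setD)
  then have a: "a \<in> set xs" by simp
  have rest: "mset (remove1 a xs) = mset ys"
    using Cons.prems by simp
  have "(\<Prod>x\<leftarrow>remove1 a xs. (a - x)^2) = (\<Prod>x\<leftarrow>ys. (a - x)^2)"
    using rest by (simp flip: prod_mset_prod_list)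
  then show ?case
    by (simp add: root_disc_remove1[OF a] Cons.IH[OF rest])
qed simp

lemma poly_disc_linear_factors: "poly_disc (\<Prod>r\<leftarrow>rs. [:- r, 1:]) = root_disc rs"
proof -
  define rs' where "rs' = (SOME rs'. (\<Prod>r\<leftarrow>rs. [:- r, 1:]) = (\<Prod>r\<leftarrow>rs'. [:- r, 1:]))"
  have "(\<Prod>r\<leftarrow>rs. [:- r, 1:]) = (\<Prod>r\<leftarrow>rs'. [:- r, 1:])"
    unfolding rs'_def by (rule someI[of _ rs]) (rule refl)
  then have "mset rs = mset rs'"
    by (rule reconstruct_poly_monic_defines_mset)
  then have "root_disc rs = root_disc rs'"
    by (rule root_disc_mset_eq)
  then show ?thesis
    unfolding poly_disc_def Let_def rs'_def[symmetric] prod_pairs_eq_root_disc by simp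
qed

lemma prod_list_plus_minus:
  "(\<Prod>x\<leftarrow>concat (map (\<lambda>s. [s, - s]) ss). f x) = (\<Prod>s\<leftarrow>ss. f s * f (- s))"
  by (induction ss) (simp_all add: ac_simps)

lemma prod_list_map_mult:
  "(\<Prod>x\<leftarrow>xs. f x * g x) = (\<Prod>x\<leftarrow>xs. f x) * (\<Prod>x\<leftarrow>xs. g x :: 'a::comm_monoid_mult)"
  by (induction xs) (simp_all add: ac_simps)

lemma root_disc_plus_minus:
  fixes ss :: "'a::comm_ring_1 list"
  shows "root_disc (concat (map (\<lambda>s. [s, - s]) ss))
    = 4 ^ length ss * (\<Prod>s\<leftarrow>ss. s^2) * root_disc (map (\<lambda>s. s^2) ss) ^ 2"
proof (induction ss)
  case (Cons s ss)
  define D where "D = concat (map (\<lambda>s. [s, - s]) ss)"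
  define P where "P = (\<Prod>t\<leftarrow>ss. (s^2 - t^2)^2)"
  have "(\<Prod>x\<leftarrow>D. (s - x)^2) * (\<Prod>x\<leftarrow>D. (- s - x)^2) = (\<Prod>x\<leftarrow>D. (s - x)^2 * (- s - x)^2)"
    by (rule prod_list_map_mult[symmetric])
  also have "\<dots> = (\<Prod>x\<leftarrow>D. (s^2 - x^2)^2)"
    by (rule arg_cong[where f = "\<lambda>f. prod_list (map f D)"]) (auto simp: power2_eq_square algebra_simps)
  also have "\<dots> = (\<Prod>t\<leftarrow>ss. (s^2 - t^2)^2 * (s^2 - t^2)^2)"
    unfolding D_def prod_list_plus_minus by simp
  also have "\<dots> = P^2"
    unfolding P_def power2_eq_square[of "prod_list _"] by (rule prod_list_map_mult)
  finally have cross: "(\<Prod>x\<leftarrow>D. (s - x)^2) * (\<Prod>x\<leftarrow>D. (- s - x)^2) = P^2" .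
  have "(s - - s)^2 = 4 * s^2"
    by (simp add: power2_eq_square algebra_simps)
  then have "root_disc (concat (map (\<lambda>s. [s, - s]) (s # ss)))
      = 4 * s^2 * ((\<Prod>x\<leftarrow>D. (s - x)^2) * (\<Prod>x\<leftarrow>D. (- s - x)^2)) * root_disc D"
    by (simp add: D_def mult_ac)
  also have "root_disc D = 4 ^ length ss * (\<Prod>s\<leftarrow>ss. s^2) * root_disc (map (\<lambda>s. s^2) ss) ^ 2"
    unfolding D_def by (rule Cons.IH)
  also have "root_disc (map (\<lambda>s. s^2) (s # ss)) = P * root_disc (map (\<lambda>s. s^2) ss)"
    by (simp add: P_def o_def)
  ultimately show ?case
    unfolding cross by (simp add: power_mult_distrib mult_ac)
qed simp

lemma pcompose_prod_list:
  "(\<Prod>x\<leftarrow>xs. f x) \<circ>\<^sub>p q = (\<Prod>x\<leftarrow>xs. f x \<circ>\<^sub>p q :: 'a::comm_ring_1 poly)"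
  by (induction xs) (simp_all add: pcompose_mult)

lemma poly_disc_pcompose_square:
  fixes g :: "complex poly"
  assumes "lead_coeff g = 1"
  shows "poly_disc (g \<circ>\<^sub>p [:0, 0, 1:]) = (-4) ^ degree g * poly g 0 * poly_disc g ^ 2"
proof -
  obtain \<mu>s where g: "g = (\<Prod>\<mu>\<leftarrow>\<mu>s. [:- \<mu>, 1:])" and len: "length \<mu>s = degree g"
    using fundamental_theorem_algebra_factorized[of g] assms by auto
  define ss where "ss = map csqrt \<mu>s"
  have factor: "[:- \<mu>, 1:] \<circ>\<^sub>p [:0, 0, 1:] = [:- csqrt \<mu>, 1:] * [:- (- csqrt \<mu>), 1:]" for \<mu>
    by (simp add: power2_eq_square[symmetric])
  have "g \<circ>\<^sub>p [:0, 0, 1:] = (\<Prod>\<mu>\<leftarrow>\<mu>s. [:- csqrt \<mu>, 1:] * [:- (- csqrt \<mu>), 1:])"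
    unfolding g pcompose_prod_list factor ..
  also have "\<dots> = (\<Prod>r\<leftarrow>concat (map (\<lambda>s. [s, - s]) ss). [:- r, 1:])"
    unfolding prod_list_plus_minus ss_def by (simp add: o_def)
  finally have "poly_disc (g \<circ>\<^sub>p [:0, 0, 1:]) = root_disc (concat (map (\<lambda>s. [s, - s]) ss))"
    by (simp only: poly_disc_linear_factors)
  also have "\<dots> = 4 ^ degree g * (\<Prod>\<mu>\<leftarrow>\<mu>s. \<mu>) * root_disc \<mu>s ^ 2"
    unfolding root_disc_plus_minus ss_def by (simp add: len o_def)
  finally have disc_square:
    "poly_disc (g \<circ>\<^sub>p [:0, 0, 1:]) = 4 ^ degree g * (\<Prod>\<mu>\<leftarrow>\<mu>s. \<mu>) * root_disc \<mu>s ^ 2" .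
  have "poly (\<Prod>\<mu>\<leftarrow>\<mu>s. [:- \<mu>, 1:]) 0 = (-1) ^ length \<mu>s * (\<Prod>\<mu>\<leftarrow>\<mu>s. \<mu>)"
    by (induction \<mu>s) simp_all
  then have g_0: "poly g 0 = (-1) ^ degree g * (\<Prod>\<mu>\<leftarrow>\<mu>s. \<mu>)"
    unfolding g[symmetric] len .
  have "poly_disc g = root_disc \<mu>s"
    unfolding g by (rule poly_disc_linear_factors)
  then have "(-4) ^ degree g * poly g 0 * poly_disc g ^ 2
      = ((-4) * (-1)) ^ degree g * (\<Prod>\<mu>\<leftarrow>\<mu>s. \<mu>) * root_disc \<mu>s ^ 2"
    unfolding g_0 power_mult_distrib by (simp add: mult_ac)
  then show ?thesis
    unfolding disc_square by simp
qed

lemma poly_char_poly_0: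
  fixes A :: "'a::field mat"
  assumes A: "A \<in> carrier_mat n n"
  shows "poly (char_poly A) 0 = (-1) ^ n * det A"
proof -
  have "- char_matrix A 0 = (-1) \<cdot>\<^sub>m A"
    using A unfolding char_matrix_def by (auto intro!: eq_matI)
  then show ?thesis
    using char_poly_matrix[OF A, of 0] det_smult[of "-1" A] A by simp
qed

lemma char_poly_pcompose:
  fixes B :: "'a::comm_ring_1 mat"
  assumes B: "B \<in> carrier_mat m m"
  shows "char_poly B \<circ>\<^sub>p q = det (q \<cdot>\<^sub>m 1\<^sub>m m + map_mat (\<lambda>a. [:- a:]) B)"
proof -
  have "map_mat (\<lambda>r. r \<circ>\<^sub>p q) (char_poly_matrix B) = q \<cdot>\<^sub>m 1\<^sub>m m + map_mat (\<lambda>a. [:- a:]) B"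
    using B unfolding char_poly_matrix_def by (auto intro!: eq_matI)
  moreover have "comm_ring_hom (\<lambda>r. r \<circ>\<^sub>p q)"
    by unfold_locales (auto simp: pcompose_add pcompose_mult)
  ultimately show ?thesis
    unfolding char_poly_def by (metis comm_ring_hom.hom_det)
qed

lemma char_poly_four_block_zero_diag:
  fixes M N :: "'a::idom mat"
  assumes M: "M \<in> carrier_mat m m" and N: "N \<in> carrier_mat m m"
  shows "char_poly (four_block_mat (0\<^sub>m m m) M N (0\<^sub>m m m)) = char_poly (N * M) \<circ>\<^sub>p [:0, 0, 1:]"
proof -
  \<comment> \<open>Right multiplication by \<open>Q = [[I, M], [0, x I]]\<close> turns \<open>x I - A\<close> into the block lower
    triangular \<open>[[x I, 0], [-N, x\<^sup>2 I - N M]]\<close>; then cancel \<open>det Q = x\<^sup>m\<close>.\<close>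
  define X :: "'a poly" where "X = [:0, 1:]"
  define C where "C B = map_mat (\<lambda>a. [:a:]) B" for B :: "'a mat"
  define XI where "XI = X \<cdot>\<^sub>m 1\<^sub>m m"
  define P where "P = char_poly_matrix (four_block_mat (0\<^sub>m m m) M N (0\<^sub>m m m))"
  define Q where "Q = four_block_mat (1\<^sub>m m) (C M) (0\<^sub>m m m) XI"
  define S where "S = [:0, 0, 1:] \<cdot>\<^sub>m 1\<^sub>m m + map_mat (\<lambda>a. [:- a:]) (N * M)"
  have CM: "C M \<in> carrier_mat m m" and CN: "C N \<in> carrier_mat m m" and XI: "XI \<in> carrier_mat m m"
    using M N by (auto simp: C_def XI_def)
  have P: "P = four_block_mat XI (- C M) (- C N) XI"
    unfolding P_def char_poly_matrix_def C_def XI_def X_def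
    using M N by (auto intro!: eq_matI)
  have "XI * C M + (- C M) * XI = 0\<^sub>m m m"
    using CM by (auto intro!: eq_matI simp: XI_def)
  moreover have "(- C N) * C M + XI * XI = S"
  proof -
    have "C N * C M = C (N * M)"
      unfolding C_def using coeff_lift_hom.mat_hom_mult[OF N M] by simp
    then show ?thesis
      using CM CN M N unfolding S_def XI_def X_def C_def by (auto intro!: eq_matI)
  qed
  ultimately have PQ: "P * Q = four_block_mat XI (0\<^sub>m m m) (- C N) S"
    unfolding P Q_def
    by (subst mult_four_block_mat[OF XI uminus_carrier_mat[OF CM] uminus_carrier_mat[OF CN] XI
          one_carrier_mat CM zero_carrier_mat XI]) (use CM CN XI in simp)
  have S: "S \<in> carrier_mat m m"
    unfolding S_def using M N by simp
  have det_XI: "det XI = X ^ m"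
    unfolding XI_def by simp
  have "det P * X ^ m = det (P * Q)"
    using det_mult[of P "m + m" Q] det_four_block_mat_lower_left_zero[OF one_carrier_mat CM refl XI]
    unfolding P Q_def det_XI by (simp add: CM XI)
  also have "\<dots> = X ^ m * det S"
    unfolding PQ det_four_block_mat_upper_right_zero[OF XI refl uminus_carrier_mat[OF CN] S] det_XI ..
  finally have "det P = det S"
    by (simp add: X_def)
  then show ?thesis
    unfolding char_poly_pcompose[OF mult_carrier_mat[OF N M]] S_def[symmetric]
    by (simp add: P_def char_poly_def)
qed

lemma mat_disc_four_block_zero_diag:
  fixes M N :: "rat mat"
  assumes M: "M \<in> carrier_mat m m" and N: "N \<in> carrier_mat m m"
  shows "mat_disc (four_block_mat (0\<^sub>m m m) M N (0\<^sub>m m m))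
    = 4 ^ m * of_rat (det (N * M)) * mat_disc (N * M) ^ 2"
proof -
  have NM: "N * M \<in> carrier_mat m m"
    using M N by simp
  define g where "g = map_poly (of_rat :: rat \<Rightarrow> complex) (char_poly (N * M))"
  have lead: "lead_coeff g = 1" and deg: "degree g = m"
    using degree_monic_char_poly[OF NM] by (simp_all add: g_def)
  have g_0: "poly g 0 = (-1) ^ m * of_rat (det (N * M))"
    unfolding g_def of_rat_hom.poly_map_poly_0 poly_char_poly_0[OF NM] by (simp add: of_rat_mult of_rat_power)
  have "mat_disc (four_block_mat (0\<^sub>m m m) M N (0\<^sub>m m m)) = poly_disc (g \<circ>\<^sub>p [:0, 0, 1:])"
    unfolding mat_disc_def char_poly_four_block_zero_diag[OF M N] g_def by (simp add: of_rat_hom.map_poly_pcompose)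
  also have "\<dots> = (-4) ^ m * poly g 0 * poly_disc g ^ 2"
    unfolding poly_disc_pcompose_square[OF lead] deg ..
  also have "\<dots> = ((-4) * (-1)) ^ m * of_rat (det (N * M)) * mat_disc (N * M) ^ 2"
    unfolding g_0 power_mult_distrib by (simp add: mat_disc_def g_def mult_ac)
  finally show ?thesis
    by simp
qed

lemma has_cycleI:
  assumes "3 \<le> L" and "inj_on v {0..<L}" and "v L = v 0"
    and "\<And>i. i < L \<Longrightarrow> E (v i) (v (Suc i))"
  shows "has_cycle E"
  unfolding has_cycle_def
proof (intro exI conjI allI impI)
  let ?vs = "map v [0..<L]"
  show "3 \<le> length ?vs" "distinct ?vs"
    using assms(1,2) by (simp_all add: distinct_map)
  show "E (?vs ! i) (?vs ! Suc i)" if "Suc i < length ?vs" for i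
    using that assms(4) by simp
  have "E (v (L - 1)) (v (Suc (L - 1)))"
    using assms(1) assms(4)[of "L - 1"] by simp
  then show "E (last ?vs) (hd ?vs)"
    using assms(1,3) by (simp add: last_map hd_map)
qed

lemma has_cycle_alternating:
  fixes y z :: "nat \<Rightarrow> nat"
  assumes "2 \<le> k" and "y k = y 0"
    and "inj_on y {0..<k}" and "inj_on z {0..<k}"
    and "\<And>i j. i < k \<Longrightarrow> j < k \<Longrightarrow> y i \<noteq> z j"
    and "\<And>j. j < k \<Longrightarrow> E (y j) (z j)" and "\<And>j. j < k \<Longrightarrow> E (z j) (y (Suc j))"
  shows "has_cycle E"
proof -
  define v where "v i = (if even i then y (i div 2) else z (i div 2))" for i
  show ?thesis
  proof (rule has_cycleI[of "2 * k" v])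
    show "inj_on v {0..<2 * k}"
    proof (rule inj_onI)
      fix a b assume "a \<in> {0..<2 * k}" "b \<in> {0..<2 * k}" and v: "v a = v b"
      then have "a div 2 < k" "b div 2 < k" by auto
      with v have "even a = even b \<and> a div 2 = b div 2"
        using assms(3,4) assms(5)[of "a div 2" "b div 2"] assms(5)[of "b div 2" "a div 2"]
        by (auto simp: v_def split: if_splits dest: inj_onD)
      then show "a = b" by presburger
    qed
    show "E (v i) (v (Suc i))" if "i < 2 * k" for i
      using that assms(6,7)[of "i div 2"] by (auto simp: v_def)
  qed (use assms(1,2) in \<open>auto simp: v_def\<close>)
qed

lemma funpow_cycle:
  assumes "inj f" and "finite {y. \<exists>n. y = (f ^^ n) x}"
  obtains k where "0 < k" and "(f ^^ k) x = x" and "inj_on (\<lambda>j. (f ^^ j) x) {0..<k}"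
proof -
  define k where "k = (LEAST k. 0 < k \<and> (f ^^ k) x = x)"
  obtain n where "0 < n" "(f ^^ n) x = x"
    using funpow_inj_finite[OF assms] .
  then have k: "0 < k \<and> (f ^^ k) x = x"
    unfolding k_def by (rule LeastI[of _ n, OF conjI])
  moreover have "(f ^^ j) x \<noteq> x" if "0 < j" "j < k" for j
    using not_less_Least[of j "\<lambda>k. 0 < k \<and> (f ^^ k) x = x"] that unfolding k_def by blast
  ultimately have "inj_on (\<lambda>j. (f ^^ j) x) {0..<k}"
    by (intro inj_on_funpow_least) auto
  with k that show ?thesis by blast
qed

lemma perfect_matching_unique_if_acyclic:
  assumes nc: "\<not> has_cycle E" and sym: "\<And>i j. E i j \<Longrightarrow> E j i"
    and \<pi>: "\<pi> permutes {0..<m}" and \<pi>': "\<pi>' permutes {0..<m}"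
    and match: "\<And>i. i < m \<Longrightarrow> E i (m + \<pi> i)" and match': "\<And>i. i < m \<Longrightarrow> E i (m + \<pi>' i)"
  shows "\<pi> = \<pi>'"
proof (rule ccontr)
  assume "\<pi> \<noteq> \<pi>'"
  \<comment> \<open>Walking along the orbit of \<open>x\<close> under \<open>\<pi>'\<inverse> \<circ> \<pi>\<close>, alternately through
    \<open>\<pi>\<close>-edges and \<open>\<pi>'\<close>-edges, closes a cycle.\<close>
  then obtain x where x: "\<pi> x \<noteq> \<pi>' x" by auto
  have "x < m"
  proof (rule ccontr)
    assume "\<not> x < m"
    then have "\<pi> x = x" "\<pi>' x = x"
      using permutes_not_in[OF \<pi>] permutes_not_in[OF \<pi>'] by auto
    with x show False by simp
  qed
  define \<rho> where "\<rho> = inv_into UNIV \<pi>' \<circ> \<pi>"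
  have \<rho>: "\<rho> permutes {0..<m}"
    unfolding \<rho>_def by (intro permutes_compose permutes_inv \<pi> \<pi>')
  have \<pi>'_\<rho>: "\<pi>' (\<rho> u) = \<pi> u" for u
    unfolding \<rho>_def using permutes_inverses(1)[OF \<pi>'] by simp
  define y where "y = (\<lambda>j. (\<rho> ^^ j) x)"
  have y_less: "y j < m" for j
    unfolding y_def using \<open>x < m\<close> permutes_in_image[OF \<rho>] by (induction j) auto
  have "finite {u. \<exists>j. u = (\<rho> ^^ j) x}"
    by (rule finite_subset[of _ "{0..<m}"]) (use y_less in \<open>auto simp: y_def\<close>)
  then obtain k where "0 < k" and "(\<rho> ^^ k) x = x" and "inj_on (\<lambda>j. (\<rho> ^^ j) x) {0..<k}"
    by (rule funpow_cycle[OF permutes_inj[OF \<rho>]])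
  then have y_k: "y k = y 0" and y_inj: "inj_on y {0..<k}"
    by (simp_all add: y_def)
  have "k \<noteq> 1"
    using y_k x \<pi>'_\<rho>[of x] by (auto simp: y_def)
  have "has_cycle E"
  proof (rule has_cycle_alternating[of k y "\<lambda>j. m + \<pi> (y j)"])
    show "2 \<le> k"
      using \<open>0 < k\<close> \<open>k \<noteq> 1\<close> by simp
    show "inj_on (\<lambda>j. m + \<pi> (y j)) {0..<k}"
      using y_inj by (auto simp: inj_on_def permutes_inj[OF \<pi>, THEN inj_eq])
    show "y i \<noteq> m + \<pi> (y j)" for i j
      using y_less[of i] by simp
    show "E (y j) (m + \<pi> (y j))" for j
      using match y_less by simp
    show "E (m + \<pi> (y j)) (y (Suc j))" for j
    proof -
      have "y (Suc j) = \<rho> (y j)"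
        by (simp add: y_def)
      then show ?thesis
        using sym match'[of "\<rho> (y j)"] \<pi>'_\<rho>[of "y j"] y_less[of "Suc j"] by simp
    qed
  qed (use y_k y_inj in simp_all)
  with nc show False ..
qed

lemma det_biadjacency_if_acyclic:
  fixes M :: "'a::comm_ring_1 mat"
  assumes M: "M \<in> carrier_mat m m"
    and M_E: "\<And>i j. i < m \<Longrightarrow> j < m \<Longrightarrow> M $$ (i, j) = (if E i (m + j) then 1 else 0)"
    and nc: "\<not> has_cycle E" and sym: "\<And>i j. E i j \<Longrightarrow> E j i"
  shows "det M \<in> {0, 1, -1}"
proof -
  define S where "S = {\<pi>. \<pi> permutes {0..<m} \<and> (\<forall>i<m. E i (m + \<pi> i))}"
  have entries: "(\<Prod>i = 0..<m. M $$ (i, \<pi> i)) = (if \<pi> \<in> S then 1 else 0)"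
    if "\<pi> permutes {0..<m}" for \<pi>
    using that permutes_in_image[OF that] by (auto simp: S_def M_E intro!: prod.neutral prod_zero)
  have "det M = (\<Sum>\<pi> \<in> {\<pi>. \<pi> permutes {0..<m}}. if \<pi> \<in> S then signof \<pi> else 0)"
    unfolding det_def'[OF M] by (rule sum.cong) (simp_all add: entries)
  also have "\<dots> = (\<Sum>\<pi> \<in> {\<pi>. \<pi> permutes {0..<m}} \<inter> S. signof \<pi>)"
    by (rule sum.inter_restrict[symmetric]) (simp add: finite_permutations)
  also have "{\<pi>. \<pi> permutes {0..<m}} \<inter> S = S"
    by (auto simp: S_def)
  finally have det: "det M = (\<Sum>\<pi> \<in> S. signof \<pi>)" .
  have "\<pi> = \<pi>'" if "\<pi> \<in> S" "\<pi>' \<in> S" for \<pi> \<pi>'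
    using that perfect_matching_unique_if_acyclic[OF nc sym] unfolding S_def by blast
  then have "S = {} \<or> (\<exists>\<pi>. S = {\<pi>})"
    by blast
  then show ?thesis
    using det by (auto simp: sign_def)
qed

lemma det_gram_biadjacency_if_acyclic:
  fixes M :: "'a::comm_ring_1 mat"
  assumes M: "M \<in> carrier_mat m m"
    and M_E: "\<And>i j. i < m \<Longrightarrow> j < m \<Longrightarrow> M $$ (i, j) = (if E i (m + j) then 1 else 0)"
    and nc: "\<not> has_cycle E" and sym: "\<And>i j. E i j \<Longrightarrow> E j i"
  shows "det (transpose_mat M * M) \<in> {0, 1}"
proof -
  have "transpose_mat M \<in> carrier_mat m m"
    using M by simp
  then have "det (transpose_mat M * M) = det M * det M"
    using det_mult[OF _ M] det_transpose[OF M] by simp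
  then show ?thesis
    using det_biadjacency_if_acyclic[OF M M_E nc sym] by auto
qed

lemma det_nonzero_obtain_perm:
  fixes A :: "'a::comm_ring_1 mat"
  assumes A: "A \<in> carrier_mat n n" and "det A \<noteq> 0"
  obtains \<sigma> where "\<sigma> permutes {0..<n}" and "\<And>i. i < n \<Longrightarrow> A $$ (i, \<sigma> i) \<noteq> 0"
proof -
  have "\<exists>\<sigma>. \<sigma> permutes {0..<n} \<and> (\<forall>i<n. A $$ (i, \<sigma> i) \<noteq> 0)"
  proof (rule ccontr)
    assume no_perm: "\<not> ?thesis"
    have "(\<Prod>i = 0..<n. A $$ (i, \<sigma> i)) = 0" if \<sigma>: "\<sigma> permutes {0..<n}" for \<sigma>
    proof -
      obtain i where "i < n" and "A $$ (i, \<sigma> i) = 0"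
        using no_perm \<sigma> by blast
      then show ?thesis
        by (intro prod_zero) auto
    qed
    then have "det A = 0"
      unfolding det_def'[OF A] by (intro sum.neutral) simp
    with \<open>det A \<noteq> 0\<close> show False ..
  qed
  with that show ?thesis by blast
qed

lemma square_if_det_four_block_zero_diag:
  fixes M N :: "'a::comm_ring_1 mat"
  assumes M: "M \<in> carrier_mat p q" and N: "N \<in> carrier_mat q p"
    and det: "det (four_block_mat (0\<^sub>m p p) M N (0\<^sub>m q q)) \<noteq> 0"
  shows "p = q"
proof -
  let ?A = "four_block_mat (0\<^sub>m p p) M N (0\<^sub>m q q)"
  have A: "?A \<in> carrier_mat (p + q) (p + q)"
    using M N by simp
  obtain \<sigma> where \<sigma>: "\<sigma> permutes {0..<p + q}"
    and nz: "\<And>i. i < p + q \<Longrightarrow> ?A $$ (i, \<sigma> i) \<noteq> 0"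
    using det_nonzero_obtain_perm[OF A det] by blast
  have \<sigma>_less: "\<sigma> i < p + q" if "i < p + q" for i
    using permutes_in_image[OF \<sigma>] that by simp
  have inj: "inj_on \<sigma> X" for X
    using permutes_inj[OF \<sigma>] by (rule inj_on_subset) simp
  have to_right: "\<sigma> i \<in> {p..<p + q}" if "i < p" for i
  proof -
    have "?A $$ (i, \<sigma> i) \<noteq> 0" and "\<sigma> i < p + q"
      using nz[of i] \<sigma>_less[of i] that by auto
    then show ?thesis
      using that M N by (auto split: if_splits)
  qed
  have to_left: "\<sigma> i \<in> {0..<p}" if "p \<le> i" "i < p + q" for i
  proof -
    have "?A $$ (i, \<sigma> i) \<noteq> 0" and "\<sigma> i < p + q"
      using nz[of i] \<sigma>_less[of i] that by auto
    then show ?thesis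
      using that M N by (auto split: if_splits)
  qed
  have "card {0..<p} \<le> card {p..<p + q}"
    by (rule card_inj_on_le[OF inj]) (use to_right in auto)
  moreover have "card {p..<p + q} \<le> card {0..<p}"
    by (rule card_inj_on_le[OF inj]) (use to_left in auto)
  ultimately show ?thesis
    by simp
qed

lemma irreducible_poly_0_nonzero:
  fixes f :: "'a::field poly"
  assumes irr: "irreducible f" and deg: "2 \<le> degree f"
  shows "poly f 0 \<noteq> 0"
proof
  assume "poly f 0 = 0"
  then obtain h where f: "f = [:0, 1:] * h"
    using poly_eq_0_iff_dvd[of f 0] by (auto simp: dvd_def)
  have "h \<noteq> 0"
    using deg f by auto
  then have "degree f = Suc (degree h)"
    using f by simp
  then have "\<not> is_unit h" and "\<not> is_unit [:0, 1::'a:]"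
    using deg \<open>h \<noteq> 0\<close> by (auto simp: is_unit_iff_degree)
  with irreducibleD[OF irr f] show False
    by simp
qed

lemma biadjacency_entries:
  assumes "adj_mat n E = four_block_mat (0\<^sub>m p p) M N (0\<^sub>m q q)"
    and "M \<in> carrier_mat p q" and "N \<in> carrier_mat q p" and "i < p" and "j < q"
  shows "M $$ (i, j) = (if E i (p + j) then 1 else 0)"
proof -
  have "p + q = n"
    using arg_cong[OF assms(1), of dim_row] assms(2,3) by (simp add: adj_mat_def)
  then show ?thesis
    using arg_cong[OF assms(1), of "\<lambda>A. A $$ (i, p + j)"] assms(2-5)
    by (simp add: adj_mat_def)
qed

theorem corollary4p3:
  fixes n p q :: nat and E :: "nat \<Rightarrow> nat \<Rightarrow> bool" and M :: "rat mat"
  assumes "is_tree n E"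
    and "n \<ge> 2"
    and "irreducible (char_poly (adj_mat n E))"
    and "p + q = n"
    and "M \<in> carrier_mat p q"
    and "adj_mat n E = four_block_mat (0\<^sub>m p p) M (transpose_mat M) (0\<^sub>m q q)"
  shows "mat_disc (adj_mat n E) = 2 ^ n * (mat_disc (transpose_mat M * M))^2"
proof -
  define A where "A = adj_mat n E"
  have A: "A \<in> carrier_mat n n"
    unfolding A_def adj_mat_def by simp
  have nc: "\<not> has_cycle E" and sym: "\<And>i j. E i j \<Longrightarrow> E j i"
    using assms(1) unfolding is_tree_def simple_graph_def by auto
  have char_0: "poly (char_poly A) 0 \<noteq> 0"
    using irreducible_poly_0_nonzero[OF assms(3)] degree_monic_char_poly[OF A] assms(2)
    by (simp add: A_def)
  have "p = q"
  proof (rule square_if_det_four_block_zero_diag[OF assms(5)])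
    show "transpose_mat M \<in> carrier_mat q p"
      using assms(5) by simp
    show "det (four_block_mat (0\<^sub>m p p) M (transpose_mat M) (0\<^sub>m q q)) \<noteq> 0"
      using char_0 poly_char_poly_0[OF A] unfolding A_def assms(6) by simp
  qed
  then have M: "M \<in> carrier_mat p p" and Mt: "transpose_mat M \<in> carrier_mat p p"
    and A_blocks: "A = four_block_mat (0\<^sub>m p p) M (transpose_mat M) (0\<^sub>m p p)"
    using assms(5,6) by (simp_all add: A_def)
  have "det (transpose_mat M * M) \<in> {0, 1}"
    using det_gram_biadjacency_if_acyclic[OF M biadjacency_entries[OF A_blocks[unfolded A_def] M Mt] nc sym] .
  moreover have "det (transpose_mat M * M) \<noteq> 0"
    using char_0 poly_char_poly_0[OF mult_carrier_mat[OF Mt M]]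
    unfolding A_blocks char_poly_four_block_zero_diag[OF M Mt] by (simp add: poly_pcompose)
  ultimately have det_gram: "det (transpose_mat M * M) = 1"
    by simp
  have "n = 2 * p"
    using assms(4) \<open>p = q\<close> by simp
  then have "(2::complex) ^ n = 4 ^ p"
    by (simp add: power_mult)
  then show ?thesis
    using mat_disc_four_block_zero_diag[OF M Mt] unfolding A_def[symmetric] A_blocks det_gram by simp
qed

end
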